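(* Fix $\lambda\in[0,1)$ and $p\in(0,1]$. Let $\mathbf{v}^0\in\overline{\mathcal{V}}^\infty$ and let $\mathbf{v}(\mathbf{v}^0,\cdot)$ be the unique solution to the fluid model with initial condition $\mathbf{v}^0$. Then $\sup\{i:\mathbf{v}_i(\mathbf{v}^0,t)>0\}<\infty$ for all $t>0$.
   Context: $\mathcal{S}=\{\mathbf{s}\in[0,1]^{\mathbb{Z}_+}:1=\mathbf{s}_0\ge\mathbf{s}_1\ge\cdots\ge0\}$, $\overline{\mathcal{S}}^\infty=\{\mathbf{s}\in\mathcal{S}:\sum_{i\ge1}\mathbf{s}_i<\infty\}$, $\overline{\mathcal{V}}^\infty=\{\mathbf{v}:\mathbf{v}_i=\sum_{j\ge i}\mathbf{s}_j\ \forall i,\text{ for some }\mathbf{s}\in\overline{\mathcal{S}}^\infty\}$. $g_i(\mathbf{v})=p$ if $\mathbf{v}_i>0$, $=\min\{\lambda\mathbf{v}_{i-1},p\}$ if $\mathbf{v}_i=0<\mathbf{v}_{i-1}$, $=0$ if $\mathbf{v}_i=\mathbf{v}_{i-1}=0$. A solution to the fluid model with initial condition $\mathbf{v}^0$ is $\mathbf{v}:[0,\infty)\to\overline{\mathcal{V}}^\infty$ with (0) all coordinates $L$-Lipschitz for a common $L$; (1) $\mathbf{v}(0)=\mathbf{v}^0$; (2) for all $t$, $\mathbf{v}_0-\mathbf{v}_1=1$ and $1\ge\mathbf{v}_i-\mathbf{v}_{i+1}\ge\mathbf{v}_{i+1}-\mathbf{v}_{i+2}\ge0$, $i\ge0$;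 (3) for a.e. $t$ and all $i\ge1$, $\dot{\mathbf{v}}_i=\lambda(\mathbf{v}_{i-1}-\mathbf{v}_i)-(1-p)(\mathbf{v}_i-\mathbf{v}_{i+1})-g_i(\mathbf{v})$. It exists and is unique. *)

theory Defs
  imports "HOL-Analysis.Analysis"
begin

definition S_set :: "(nat \<Rightarrow> real) set" where
  "S_set = {s. (\<forall>i. s i \<in> {0..1}) \<and> s 0 = 1 \<and> (\<forall>i. s (Suc i) \<le> s i)}"

definition S_bar_inf :: "(nat \<Rightarrow> real) set" where
  "S_bar_inf = {s \<in> S_set. summable (\<lambda>i. s (Suc i))}"

definition V_bar_inf :: "(nat \<Rightarrow> real) set" where
  "V_bar_inf = {v. \<exists>s\<in>S_bar_inf. \<forall>i. v i = (\<Sum>j. s (j + i))}"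

text \<open>The function g_i(v), meaningful for i \<ge> 1.\<close>
definition g_fun :: "real \<Rightarrow> real \<Rightarrow> nat \<Rightarrow> (nat \<Rightarrow> real) \<Rightarrow> real" where
  "g_fun lam p i v =
     (if v i > 0 then p
      else if v i = 0 \<and> 0 < v (i - 1) then min (lam * v (i - 1)) p
      else 0)"

definition fluid_solution ::
  "real \<Rightarrow> real \<Rightarrow> (nat \<Rightarrow> real) \<Rightarrow> (real \<Rightarrow> nat \<Rightarrow> real) \<Rightarrow> bool" where
  "fluid_solution lam p v0 v \<longleftrightarrow>
     (\<forall>t\<ge>0. v t \<in> V_bar_inf) \<and>
     (\<exists>L. \<forall>i. L-lipschitz_on {0..} (\<lambda>t. v t i)) \<and>
     v 0 = v0 \<and>
     (\<forall>t\<ge>0. v t 0 - v t 1 = 1 \<and>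
        (\<forall>i. 1 \<ge> v t i - v t (i + 1) \<and>
             v t i - v t (i + 1) \<ge> v t (i + 1) - v t (i + 2) \<and>
             v t (i + 1) - v t (i + 2) \<ge> 0)) \<and>
     (AE t in lborel. t \<ge> 0 \<longrightarrow>
        (\<forall>i\<ge>1. ((\<lambda>s. v s i) has_real_derivative
            (lam * (v t (i - 1) - v t i) - (1 - p) * (v t i - v t (i + 1)) - g_fun lam p i (v t)))
            (at t)))"

end

theory Submission
  imports Defs
begin

text \<open>Deep in the tail both \<open>v\<^sub>i\<^sub>-\<^sub>1\<close> and \<open>v\<^sub>i\<close> are small. While \<open>v\<^sub>i > 0\<close> level \<open>i\<close> is served
  at rate \<open>p\<close> but fed at rate at most \<open>\<lambda> v\<^sub>i\<^sub>-\<^sub>1 \<le> p/2\<close>, so it empties within a short time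
  \<open>\<delta>\<close>, during which Lipschitz continuity keeps \<open>v\<^sub>i\<^sub>-\<^sub>1\<close> small. Emptied levels stay small,
  so after \<open>n\<close> steps of length \<open>\<delta> = t/n\<close> every level beyond \<open>K + n\<close> is empty, where \<open>K\<close>
  comes from \<open>v\<^sup>0\<^sub>i \<rightarrow> 0\<close>. Since the fluid equations hold only almost everywhere, the
  drain estimate rests on the fact that a Lipschitz function with almost everywhere
  nonpositive derivative is nonincreasing.\<close>

lemma continuous_on_nonincreasing_at_right_imp_le:
  fixes h :: "real \<Rightarrow> real"
  assumes "a \<le> b" and cont: "continuous_on {a..b} h"
    and right: "\<And>x. a \<le> x \<Longrightarrow> x < b \<Longrightarrow> eventually (\<lambda>y. h y \<le> h x) (at_right x)"
  shows "h b \<le> h a"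
proof -
  define A where "A = {a..b} \<inter> h -` {..h a}"
  have "closed A" unfolding A_def by (rule continuous_closed_preimage[OF cont]) auto
  moreover have "A \<noteq> {}" "bdd_above A" using \<open>a \<le> b\<close> by (auto simp: A_def)
  ultimately have c: "Sup A \<in> A" using closed_contains_Sup by blast
  have "Sup A = b"
  proof (rule ccontr)
    assume "Sup A \<noteq> b"
    with c have "a \<le> Sup A" "Sup A < b" by (auto simp: A_def)
    then have "eventually (\<lambda>y. h y \<le> h (Sup A)) (at_right (Sup A))" by (rule right)
    then obtain r where "Sup A < r" and r: "\<forall>y>Sup A. y < r \<longrightarrow> h y \<le> h (Sup A)"
      unfolding eventually_at_right_field by blast
    define y where "y = (Sup A + min r b) / 2"
    have "Sup A < y" "y < b" "h y \<le> h (Sup A)"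
      using r \<open>Sup A < r\<close> \<open>Sup A < b\<close> by (auto simp: y_def)
    with c have "y \<in> A" by (auto simp: A_def)
    from cSup_upper[OF this \<open>bdd_above A\<close>] \<open>Sup A < y\<close> show False by simp
  qed
  with c show ?thesis by (auto simp: A_def)
qed

lemma continuous_on_last_zero:
  fixes g :: "real \<Rightarrow> real"
  assumes "continuous_on {a..b} g" "a \<le> b"
  obtains c where "a \<le> c" "c \<le> b" "c = a \<or> g c = 0" "\<And>s. c < s \<Longrightarrow> s \<le> b \<Longrightarrow> g s \<noteq> 0"
proof -
  define Z where "Z = insert a ({a..b} \<inter> g -` {0})"
  have "closed Z" unfolding Z_def using assms(1) by (intro closed_insert continuous_closed_preimage) auto
  moreover have "Z \<subseteq> {a..b}" using \<open>a \<le> b\<close> by (auto simp: Z_def)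
  then have "bdd_above Z" by (rule bdd_above_mono[OF bdd_above_Icc])
  ultimately have "Sup Z \<in> Z" by (intro closed_contains_Sup) (auto simp: Z_def)
  moreover have "g s \<noteq> 0" if "Sup Z < s" "s \<le> b" for s
  proof
    assume "g s = 0"
    with \<open>Sup Z \<in> Z\<close> \<open>Z \<subseteq> {a..b}\<close> that have "s \<in> Z" by (auto simp: Z_def)
    with cSup_upper[OF _ \<open>bdd_above Z\<close>] \<open>Sup Z < s\<close> show False by fastforce
  qed
  ultimately show ?thesis using \<open>Z \<subseteq> {a..b}\<close> by (intro that[of "Sup Z"]) (auto simp: Z_def)
qed

lemma null_set_subset_small_open:
  fixes N :: "real set"
  assumes "N \<in> null_sets lborel" "e > 0"
  obtains T where "open T" "N \<subseteq> T" "T \<in> lmeasurable" "measure lebesgue T \<le> e"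
proof -
  have N: "N \<in> null_sets lebesgue" using assms(1) by (rule null_sets_completionI)
  then obtain T where T: "open T" "N \<subseteq> T" "T - N \<in> lmeasurable" "emeasure lebesgue (T - N) < ennreal e"
    using sets_lebesgue_outer_open[OF null_setsD2[OF N] assms(2)] by blast
  have "sym_diff (T - N) T \<subseteq> N" by auto
  then have "negligible (sym_diff (T - N) T)"
    using N negligible_iff_null_sets negligible_subset by blast
  then have Tm: "T \<in> lmeasurable" by (rule lmeasurable_negligible_symdiff[OF T(3)])
  have "T = (T - N) \<union> N" using T(2) by auto
  then have "measure lebesgue T = measure lebesgue (T - N)"
    using measure_Un_null_set[of "T - N" lebesgue N] T(3) N by auto
  also have "\<dots> \<le> e"
    using T(3,4) by (simp add: emeasure_eq_measure2 ennreal_less_iff)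
  finally show ?thesis using that T Tm by blast
qed

lemma measure_Int_atLeastAtMost_split:
  fixes T :: "real set"
  assumes "T \<in> lmeasurable" "a \<le> x" "x \<le> y"
  shows "measure lebesgue (T \<inter> {a..y}) = measure lebesgue (T \<inter> {a..x}) + measure lebesgue (T \<inter> {x<..y})"
proof -
  have "T \<inter> {a..y} = (T \<inter> {a..x}) \<union> (T \<inter> {x<..y})" using assms by auto
  moreover have "T \<inter> {a..x} \<inter> (T \<inter> {x<..y}) = {}" by auto
  moreover have "T \<inter> {a..x} \<in> lmeasurable" "T \<inter> {x<..y} \<in> lmeasurable"
    using assms(1) by (auto intro: fmeasurable_Int_fmeasurable)
  ultimately show ?thesis using measure_Un3 by (metis diff_zero measure_empty)
qed

lemma measure_lebesgue_greaterThanAtMost: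
  fixes x y :: real
  assumes "x \<le> y"
  shows "measure lebesgue {x<..y} = y - x"
  using measure_completion[of "{x<..y}" lborel] measure_lborel_Ioc[OF assms] by simp

lemma lipschitz_on_measure_Int_atLeastAtMost:
  fixes T :: "real set"
  assumes "T \<in> lmeasurable"
  shows "1-lipschitz_on {a..} (\<lambda>s. measure lebesgue (T \<inter> {a..s}))"
proof (rule lipschitz_on_leI)
  fix x y assume "x \<in> {a..}" "x \<le> y"
  then have split: "measure lebesgue (T \<inter> {a..y}) = measure lebesgue (T \<inter> {a..x}) + measure lebesgue (T \<inter> {x<..y})"
    by (intro measure_Int_atLeastAtMost_split[OF assms]) auto
  have "{x<..y} \<in> lmeasurable" by (intro measurable_convex) auto
  then have "measure lebesgue (T \<inter> {x<..y}) \<le> measure lebesgue {x<..y}"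
    using assms by (intro measure_mono_fmeasurable) auto
  also have "\<dots> = dist x y" using \<open>x \<le> y\<close> by (simp add: measure_lebesgue_greaterThanAtMost dist_real_def)
  finally show "dist (measure lebesgue (T \<inter> {a..x})) (measure lebesgue (T \<inter> {a..y})) \<le> 1 * dist x y"
    unfolding split dist_real_def by simp
qed simp

lemma has_real_derivative_eventually_at_right_less:
  assumes "(f has_real_derivative D) (at x)" "D < e"
  shows "eventually (\<lambda>y. f y - f x < e * (y - x)) (at_right x)"
proof -
  have "((\<lambda>y. (f y - f x) / (y - x)) \<longlongrightarrow> D) (at_right x)"
    using assms(1) unfolding has_field_derivative_iff filterlim_at_split by blast
  then have "eventually (\<lambda>y. (f y - f x) / (y - x) < e) (at_right x)"
    using assms(2) by (rule order_tendstoD(2))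
  then show ?thesis using eventually_at_right_less[of x]
    by eventually_elim (simp add: divide_less_eq)
qed

text \<open>Inside the open set \<open>T\<close> only the Lipschitz bound is available, and its cost is charged
  to the measure of \<open>T\<close>; outside \<open>T\<close> a nonpositive derivative costs at most \<open>e\<close> per unit time.\<close>
lemma lipschitz_on_local_increment_le:
  fixes f :: "real \<Rightarrow> real"
  assumes lip: "L-lipschitz_on {a..b} f" and T: "open T" "T \<in> lmeasurable"
    and "a \<le> x" "x < b" "0 < e"
    and deriv: "x \<notin> T \<Longrightarrow> \<exists>D\<le>0. (f has_real_derivative D) (at x)"
  shows "eventually (\<lambda>y. f y - f x \<le> e * (y - x) + L * measure lebesgue (T \<inter> {x<..y})) (at_right x)"
proof (cases "x \<in> T")
  case True
  then obtain r where "r > 0" "ball x r \<subseteq> T" using T(1) open_contains_ball by blast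
  have "f y - f x \<le> e * (y - x) + L * measure lebesgue (T \<inter> {x<..y})" if "x < y" "y < min (x + r) b" for y
  proof -
    from that \<open>ball x r \<subseteq> T\<close> have "T \<inter> {x<..y} = {x<..y}" by (auto simp: dist_real_def subset_eq)
    then have "measure lebesgue (T \<inter> {x<..y}) = y - x"
      using \<open>x < y\<close> by (simp add: measure_lebesgue_greaterThanAtMost)
    moreover have "f y - f x \<le> L * (y - x)"
      using lipschitz_onD[OF lip, of y x] \<open>a \<le> x\<close> that by (simp add: dist_real_def)
    moreover have "0 \<le> e * (y - x)" using \<open>0 < e\<close> \<open>x < y\<close> by simp
    ultimately show ?thesis by simp
  qed
  then show ?thesis
    unfolding eventually_at_right_field using \<open>r > 0\<close> \<open>x < b\<close> by (intro exI[of _ "min (x + r) b"]) auto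
next
  case False
  then obtain D where "D \<le> 0" "(f has_real_derivative D) (at x)" using deriv by blast
  then have "eventually (\<lambda>y. f y - f x < e * (y - x)) (at_right x)"
    using \<open>0 < e\<close> by (intro has_real_derivative_eventually_at_right_less[of f D]) auto
  then show ?thesis
  proof eventually_elim
    case (elim y)
    moreover have "0 \<le> L * measure lebesgue (T \<inter> {x<..y})"
      using lipschitz_on_nonneg[OF lip] by simp
    ultimately show ?case by simp
  qed
qed

lemma lipschitz_on_deriv_nonpos_outside_open_le:
  fixes f :: "real \<Rightarrow> real"
  assumes "a \<le> b" and lip: "L-lipschitz_on {a..b} f"
    and T: "open T" "T \<in> lmeasurable" "a \<in> T"
    and deriv: "\<And>s. a < s \<Longrightarrow> s < b \<Longrightarrow> s \<notin> T \<Longrightarrow> \<exists>D\<le>0. (f has_real_derivative D) (at s)"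
  shows "f b \<le> f a + L * measure lebesgue (T \<inter> {a..b})"
proof -
  define \<phi> where "\<phi> s = measure lebesgue (T \<inter> {a..s})" for s
  have approx: "f b \<le> f a + L * \<phi> b + e * (b - a)" if "e > 0" for e
  proof -
    define h where "h s = f s - e * s - L * \<phi> s" for s
    have "h b \<le> h a"
    proof (rule continuous_on_nonincreasing_at_right_imp_le[OF \<open>a \<le> b\<close>])
      have "continuous_on {a..b} \<phi>" unfolding \<phi>_def
        by (rule continuous_on_subset[OF lipschitz_on_continuous_on[OF lipschitz_on_measure_Int_atLeastAtMost[OF T(2)]]]) auto
      moreover have "continuous_on {a..b} f" using lip by (rule lipschitz_on_continuous_on)
      ultimately show "continuous_on {a..b} h" unfolding h_def by (intro continuous_intros)
    next
      fix x assume "a \<le> x" "x < b"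
      have deriv_x: "\<exists>D\<le>0. (f has_real_derivative D) (at x)" if "x \<notin> T"
        using deriv[of x] that T(3) \<open>a \<le> x\<close> \<open>x < b\<close> by (cases "x = a") simp_all
      have "eventually (\<lambda>y. f y - f x \<le> e * (y - x) + L * measure lebesgue (T \<inter> {x<..y})) (at_right x)"
        by (rule lipschitz_on_local_increment_le[OF lip T(1,2) \<open>a \<le> x\<close> \<open>x < b\<close> \<open>e > 0\<close> deriv_x])
      then show "eventually (\<lambda>y. h y \<le> h x) (at_right x)"
        using eventually_at_right_less[of x]
      proof eventually_elim
        case (elim y)
        with \<open>a \<le> x\<close> have "\<phi> y = \<phi> x + measure lebesgue (T \<inter> {x<..y})"
          unfolding \<phi>_def by (intro measure_Int_atLeastAtMost_split[OF T(2)]) auto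
        with elim show ?case unfolding h_def by (simp add: algebra_simps)
      qed
    qed
    moreover have "0 \<le> L * \<phi> a" using lipschitz_on_nonneg[OF lip] by (simp add: \<phi>_def)
    ultimately show ?thesis unfolding h_def by (simp add: algebra_simps)
  qed
  have "f b \<le> f a + L * \<phi> b"
  proof (rule field_le_epsilon)
    fix e :: real assume "e > 0"
    with \<open>a \<le> b\<close> have "f b \<le> f a + L * \<phi> b + e / (b - a + 1) * (b - a)" by (intro approx) simp
    also have "\<dots> \<le> f a + L * \<phi> b + e" using \<open>e > 0\<close> \<open>a \<le> b\<close> by (simp add: field_simps)
    finally show "f b \<le> f a + L * \<phi> b + e" .
  qed
  then show ?thesis by (simp add: \<phi>_def)
qed

lemma lipschitz_on_AE_deriv_nonpos_imp_le:
  fixes f :: "real \<Rightarrow> real"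
  assumes "a \<le> b" and lip: "L-lipschitz_on {a..b} f"
    and deriv: "AE s in lborel. a < s \<longrightarrow> s < b \<longrightarrow> (\<exists>D\<le>0. (f has_real_derivative D) (at s))"
  shows "f b \<le> f a"
proof (rule field_le_epsilon)
  fix e :: real assume "e > 0"
  obtain N where deriv_N: "\<And>s. s \<in> space lborel - N \<Longrightarrow>
      a < s \<longrightarrow> s < b \<longrightarrow> (\<exists>D\<le>0. (f has_real_derivative D) (at s))"
    and N: "N \<in> null_sets lborel"
    by (rule AE_E3[OF deriv]) blast
  have "0 \<le> L" using lip by (rule lipschitz_on_nonneg)
  have "insert a N \<in> null_sets lborel"
    using null_sets.Un[OF countable_imp_null_set_lborel[of "{a}"] N] by simp
  moreover have "0 < e / (L + 1)" using \<open>e > 0\<close> \<open>0 \<le> L\<close> by simp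
  ultimately obtain T where T: "open T" "insert a N \<subseteq> T" "T \<in> lmeasurable" "measure lebesgue T \<le> e / (L + 1)"
    by (rule null_set_subset_small_open) blast
  have "f b \<le> f a + L * measure lebesgue (T \<inter> {a..b})"
    using lipschitz_on_deriv_nonpos_outside_open_le[OF \<open>a \<le> b\<close> lip T(1,3)] T(2) deriv_N by auto
  also have "\<dots> \<le> f a + L * (e / (L + 1))"
  proof -
    have "measure lebesgue (T \<inter> {a..b}) \<le> measure lebesgue T"
      using T(3) by (intro measure_mono_fmeasurable) auto
    with T(4) have "measure lebesgue (T \<inter> {a..b}) \<le> e / (L + 1)" by linarith
    with \<open>0 \<le> L\<close> show ?thesis by (intro add_left_mono mult_left_mono)
  qed
  also have "\<dots> \<le> f a + e" using \<open>e > 0\<close> \<open>0 \<le> L\<close> by (simp add: field_simps)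
  finally show "f b \<le> f a + e" .
qed

lemma V_bar_inf_elim:
  assumes "w \<in> V_bar_inf"
  obtains s where "summable s" "\<And>j. 0 \<le> s j" "\<And>i. w i = (\<Sum>j. s (j + i))"
proof -
  obtain s where s: "s \<in> S_bar_inf" "\<And>i. w i = (\<Sum>j. s (j + i))"
    using assms unfolding V_bar_inf_def by blast
  then have "summable (\<lambda>i. s (Suc i))" "\<And>j. 0 \<le> s j"
    unfolding S_bar_inf_def S_set_def by auto
  with s(2) show ?thesis using that summable_Suc_iff by blast
qed

lemma V_bar_inf_nonneg: "w \<in> V_bar_inf \<Longrightarrow> 0 \<le> w i"
proof (erule V_bar_inf_elim)
  fix s :: "nat \<Rightarrow> real"
  assume "summable s" "\<And>j. 0 \<le> s j" "\<And>i. w i = (\<Sum>j. s (j + i))"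
  then show "0 \<le> w i" by (simp add: summable_iff_shift suminf_nonneg)
qed

lemma V_bar_inf_LIMSEQ_zero: "w \<in> V_bar_inf \<Longrightarrow> w \<longlonglongrightarrow> 0"
proof (erule V_bar_inf_elim)
  fix s :: "nat \<Rightarrow> real"
  assume s: "summable s" "\<And>i. w i = (\<Sum>j. s (j + i))"
  then have "w = (\<lambda>i. suminf s - sum s {..<i})"
    using suminf_minus_initial_segment[OF s(1)] by auto
  moreover have "(\<lambda>i. suminf s - sum s {..<i}) \<longlonglongrightarrow> suminf s - suminf s"
    by (intro tendsto_intros summable_LIMSEQ s(1))
  ultimately show "w \<longlonglongrightarrow> 0" by simp
qed

lemma fluid_solution_nonneg:
  assumes "fluid_solution lam p v0 v" "0 \<le> t"
  shows "0 \<le> v t i"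
  using assms V_bar_inf_nonneg unfolding fluid_solution_def by blast

lemma fluid_solution_Suc_le:
  assumes "fluid_solution lam p v0 v" "0 \<le> t"
  shows "v t (Suc i) \<le> v t i"
proof (cases i)
  case 0
  then show ?thesis using assms unfolding fluid_solution_def by fastforce
next
  case (Suc k)
  then show ?thesis using assms unfolding fluid_solution_def
    by (metis add_2_eq_Suc' diff_ge_0_iff_ge Suc_eq_plus1)
qed

lemma fluid_solution_lipschitz:
  assumes "fluid_solution lam p v0 v"
  obtains L where "\<And>i. L-lipschitz_on {0..} (\<lambda>t. v t i)"
  using assms unfolding fluid_solution_def by blast

lemma fluid_solution_decreases:
  assumes "lam \<le> 1" "p \<le> 1" and fs: "fluid_solution lam p v0 v"
    and "0 \<le> c" "c \<le> b" "1 \<le> i"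
    and busy: "\<And>s. c < s \<Longrightarrow> s < b \<Longrightarrow> 0 < v s i \<and> v s (i - 1) \<le> p / 2"
  shows "v b i + p / 2 * b \<le> v c i + p / 2 * c"
proof -
  obtain L where "\<And>i. L-lipschitz_on {0..} (\<lambda>t. v t i)" by (rule fluid_solution_lipschitz[OF fs]) blast
  then have "L-lipschitz_on {c..b} (\<lambda>t. v t i)" by (rule lipschitz_on_subset) (use \<open>0 \<le> c\<close> in auto)
  then have lip: "(L + \<bar>p / 2\<bar> * 1)-lipschitz_on {c..b} (\<lambda>s. v s i + p / 2 * s)"
    by (intro lipschitz_on_add lipschitz_on_cmult_real lipschitz_on_id)
  have "AE s in lborel. 0 \<le> s \<longrightarrow> (\<forall>i\<ge>1. ((\<lambda>s. v s i) has_real_derivative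
      (lam * (v s (i - 1) - v s i) - (1 - p) * (v s i - v s (i + 1)) - g_fun lam p i (v s))) (at s))"
    using fs unfolding fluid_solution_def by blast
  then have "AE s in lborel. c < s \<longrightarrow> s < b \<longrightarrow>
      (\<exists>D\<le>0. ((\<lambda>s. v s i + p / 2 * s) has_real_derivative D) (at s))"
  proof eventually_elim
    case (elim s)
    show ?case
    proof (intro impI)
      assume "c < s" "s < b"
      with \<open>0 \<le> c\<close> have "0 \<le> s" by simp
      from busy[OF \<open>c < s\<close> \<open>s < b\<close>] have "0 < v s i" "v s (i - 1) \<le> p / 2" by auto
      have "v s i \<le> v s (i - 1)" "v s (i + 1) \<le> v s i"
        using fluid_solution_Suc_le[OF fs \<open>0 \<le> s\<close>, of "i - 1"] fluid_solution_Suc_le[OF fs \<open>0 \<le> s\<close>, of i]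
          \<open>1 \<le> i\<close> by simp_all
      then have "lam * (v s (i - 1) - v s i) \<le> v s (i - 1) - v s i"
        using mult_right_mono[OF \<open>lam \<le> 1\<close>, of "v s (i - 1) - v s i"] by simp
      moreover have "0 \<le> (1 - p) * (v s i - v s (i + 1))"
        using \<open>p \<le> 1\<close> \<open>v s (i + 1) \<le> v s i\<close> by simp
      moreover have "g_fun lam p i (v s) = p" using \<open>0 < v s i\<close> by (simp add: g_fun_def)
      ultimately have "lam * (v s (i - 1) - v s i) - (1 - p) * (v s i - v s (i + 1))
          - g_fun lam p i (v s) + p / 2 \<le> 0"
        using \<open>0 < v s i\<close> \<open>v s (i - 1) \<le> p / 2\<close> by linarith
      moreover have "((\<lambda>s. v s i + p / 2 * s) has_real_derivative
          lam * (v s (i - 1) - v s i) - (1 - p) * (v s i - v s (i + 1)) - g_fun lam p i (v s) + p / 2) (at s)"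
        using elim \<open>0 \<le> s\<close> \<open>1 \<le> i\<close> by (auto intro!: derivative_eq_intros)
      ultimately show "\<exists>D\<le>0. ((\<lambda>s. v s i + p / 2 * s) has_real_derivative D) (at s)" by blast
    qed
  qed
  from lipschitz_on_AE_deriv_nonpos_imp_le[OF \<open>c \<le> b\<close> lip this] show ?thesis .
qed

lemma fluid_solution_empties:
  assumes "lam \<le> 1" "p \<le> 1" and fs: "fluid_solution lam p v0 v"
    and lip: "\<And>i. L-lipschitz_on {0..} (\<lambda>t. v t i)"
    and "0 \<le> a" "0 < \<delta>" "L * \<delta> \<le> p / 4" "1 \<le> i"
    and "v a (i - 1) \<le> p / 4" "v a i < p * \<delta> / 2"
  shows "v (a + \<delta>) i = 0"
proof -
  have cont: "continuous_on {a..a + \<delta>} (\<lambda>t. v t i)"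
    by (rule continuous_on_subset[OF lipschitz_on_continuous_on[OF lip]]) (use \<open>0 \<le> a\<close> in auto)
  have "a \<le> a + \<delta>" using \<open>0 < \<delta>\<close> by simp
  obtain c where "a \<le> c" "c \<le> a + \<delta>" and vc: "c = a \<or> v c i = 0"
    and nonzero: "\<And>s. c < s \<Longrightarrow> s \<le> a + \<delta> \<Longrightarrow> v s i \<noteq> 0"
    by (rule continuous_on_last_zero[OF cont \<open>a \<le> a + \<delta>\<close>]) blast
  have busy: "0 < v s i \<and> v s (i - 1) \<le> p / 2" if "c < s" "s < a + \<delta>" for s
  proof
    have "0 \<le> v s i" using fluid_solution_nonneg[OF fs] \<open>0 \<le> a\<close> \<open>a \<le> c\<close> \<open>c < s\<close> by simp
    with nonzero that show "0 < v s i" by force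
    have "0 \<le> L" using lip by (rule lipschitz_on_nonneg)
    have "v s (i - 1) - v a (i - 1) \<le> L * (s - a)"
      using lipschitz_onD[OF lip, of s a "i - 1"] \<open>0 \<le> a\<close> \<open>a \<le> c\<close> \<open>c < s\<close> by (simp add: dist_real_def)
    also have "\<dots> \<le> L * \<delta>" using \<open>0 \<le> L\<close> \<open>a \<le> c\<close> \<open>c < s\<close> \<open>s < a + \<delta>\<close> by (simp add: mult_left_mono)
    finally show "v s (i - 1) \<le> p / 2" using assms(7,9) by simp
  qed
  have "v (a + \<delta>) i + p / 2 * (a + \<delta>) \<le> v c i + p / 2 * c"
    using fluid_solution_decreases[OF assms(1,2) fs _ \<open>c \<le> a + \<delta>\<close> \<open>1 \<le> i\<close> busy] \<open>0 \<le> a\<close> \<open>a \<le> c\<close> by simp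
  moreover have "p / 2 * (a + \<delta>) - p / 2 * c = p / 2 * (a + \<delta> - c)" by (simp add: algebra_simps)
  ultimately have drained: "v (a + \<delta>) i \<le> v c i - p / 2 * (a + \<delta> - c)" by linarith
  have "0 < p * \<delta>" using fluid_solution_nonneg[OF fs \<open>0 \<le> a\<close>, of i] assms(10) by simp
  then have "0 < p" using \<open>0 < \<delta>\<close> by (simp add: zero_less_mult_iff)
  have "v (a + \<delta>) i \<le> 0"
  proof (cases "c = a")
    case True
    then show ?thesis using drained assms(10) by simp
  next
    case False
    with vc have "v c i = 0" by simp
    moreover have "0 \<le> p / 2 * (a + \<delta> - c)" using \<open>0 < p\<close> \<open>c \<le> a + \<delta>\<close> by simp
    ultimately show ?thesis using drained by simp
  qed
  moreover have "0 \<le> v (a + \<delta>) i" using fluid_solution_nonneg[OF fs] \<open>0 \<le> a\<close> \<open>0 < \<delta>\<close> by simp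
  ultimately show ?thesis by simp
qed

lemma fluid_solution_tail_vanishes:
  assumes "lam \<le> 1" "0 < p" "p \<le> 1" and fs: "fluid_solution lam p v0 v"
    and lip: "\<And>i. L-lipschitz_on {0..} (\<lambda>t. v t i)"
    and "0 < \<delta>" "L * \<delta> \<le> p / 4"
    and small: "\<And>j. K \<le> j \<Longrightarrow> v 0 j < min (p / 4) (p * \<delta> / 2)"
  shows "K + k < j \<Longrightarrow> v (real (Suc k) * \<delta>) j = 0"
proof (induction k arbitrary: j)
  case 0
  then have "K \<le> j - 1" "K \<le> j" by simp_all
  then have "v 0 (j - 1) \<le> p / 4" "v 0 j < p * \<delta> / 2" using small by (simp_all add: less_imp_le)
  from fluid_solution_empties[OF assms(1,3) fs lip _ \<open>0 < \<delta>\<close> \<open>L * \<delta> \<le> p / 4\<close> _ this] 0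
  show ?case by simp
next
  case (Suc k)
  then have "v (real (Suc k) * \<delta>) (j - 1) \<le> p / 4" "v (real (Suc k) * \<delta>) j < p * \<delta> / 2"
    using Suc.IH[of "j - 1"] Suc.IH[of j] \<open>0 < p\<close> \<open>0 < \<delta>\<close> by simp_all
  from fluid_solution_empties[OF assms(1,3) fs lip _ \<open>0 < \<delta>\<close> \<open>L * \<delta> \<le> p / 4\<close> _ this] Suc.prems \<open>0 < \<delta>\<close>
  show ?case by (simp add: algebra_simps)
qed

theorem proposition3:
  fixes lam p :: real and v0 :: "nat \<Rightarrow> real" and v :: "real \<Rightarrow> nat \<Rightarrow> real"
  assumes "0 \<le> lam" and "lam < 1" and "0 < p" and "p \<le> 1"
    and "v0 \<in> V_bar_inf"
    and "fluid_solution lam p v0 v"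
  shows "\<forall>t>0. bdd_above {i. v t i > 0}"
proof (intro allI impI)
  fix t :: real assume "0 < t"
  obtain L where lip: "\<And>i. L-lipschitz_on {0..} (\<lambda>t. v t i)"
    by (rule fluid_solution_lipschitz[OF assms(6)]) blast
  \<comment> \<open>Split \<open>[0, t]\<close> into \<open>n\<close> steps so short that \<open>v\<^sub>i\<^sub>-\<^sub>1\<close> cannot grow by more than \<open>p/4\<close> within one step.\<close>
  define n where "n = nat \<lceil>4 * L * t / p\<rceil> + 1"
  define \<delta> where "\<delta> = t / n"
  have "0 < \<delta>" using \<open>0 < t\<close> by (simp add: \<delta>_def n_def)
  have "4 * L * t / p \<le> n" unfolding n_def by linarith
  then have "L * \<delta> \<le> p / 4" using \<open>0 < p\<close> by (simp add: \<delta>_def n_def field_simps)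
  have "v 0 \<longlonglongrightarrow> 0"
    using assms(5,6) V_bar_inf_LIMSEQ_zero unfolding fluid_solution_def by auto
  moreover have "0 < min (p / 4) (p * \<delta> / 2)" using \<open>0 < p\<close> \<open>0 < \<delta>\<close> by simp
  ultimately obtain K where small: "\<And>j. K \<le> j \<Longrightarrow> v 0 j < min (p / 4) (p * \<delta> / 2)"
    using order_tendstoD(2) eventually_sequentially by metis
  have "v t j = 0" if "K + n < j" for j
  proof -
    have "t = real (Suc (n - 1)) * \<delta>" using \<open>0 < t\<close> by (simp add: \<delta>_def n_def)
    with that fluid_solution_tail_vanishes[OF less_imp_le[OF \<open>lam < 1\<close>] \<open>0 < p\<close> \<open>p \<le> 1\<close> assms(6)
        lip \<open>0 < \<delta>\<close> \<open>L * \<delta> \<le> p / 4\<close> small, where k = "n - 1"]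
    show ?thesis by simp
  qed
  then have "{i. v t i > 0} \<subseteq> {..K + n}" by (auto simp: not_less[symmetric])
  then show "bdd_above {i. v t i > 0}" by (rule bdd_above_mono[OF bdd_above_Iic])
qed

end
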